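(* Let $\psi:\mathbb R^n\to\mathbb R$ be convex with $\psi(0)=0$ and $0\in\partial\psi(0)$. Let $t>0$, $S:=S(0,0,t)=\{x:\psi(x)\le t\}$, and $y\in S$. Then $$\partial\psi^*\Big(\tfrac12\big(t-\psi(y)\big)(S-y)^\circ\Big)\subset S.$$
   Context: $\psi^*$ is the Legendre transform, $\partial\psi^*(Z)=\bigcup_{z\in Z}\partial\psi^*(z)$. For a convex set $E$ containing $0$, $E^\circ=\{z: z\cdot x\le1\ \forall x\in E\}$ is its polar body and $aE^\circ=\{az:z\in E^\circ\}$. *)

theory Defs
  imports "HOL-Analysis.Analysis"
begin

definition legendre :: "('a::real_inner \<Rightarrow> real) \<Rightarrow> 'a \<Rightarrow> ereal" where
  "legendre f z = (SUP x. ereal (inner z x - f x))"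

definition subdiff :: "('a::real_inner \<Rightarrow> real) \<Rightarrow> 'a \<Rightarrow> 'a set" where
  "subdiff f x = {g. \<forall>y. f y \<ge> f x + inner g (y - x)}"

definition esubdiff :: "('a::real_inner \<Rightarrow> ereal) \<Rightarrow> 'a \<Rightarrow> 'a set" where
  "esubdiff f z = {x. \<bar>f z\<bar> \<noteq> \<infinity> \<and> (\<forall>w. f w \<ge> f z + ereal (inner (w - z) x))}"

definition polar :: "'a::real_inner set \<Rightarrow> 'a set" where
  "polar E = {z. \<forall>x\<in>E. inner z x \<le> 1}"

end

theory Submission
  imports Defs
begin

text \<open>
  A point \<open>x \<in> \<partial>\<psi>\<^sup>*(z)\<close> with \<open>\<psi>\<^sup>*(z)\<close> finite satisfies \<open>z \<in> \<partial>\<psi>(x)\<close>; this needs the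
  biconjugate inequality \<open>\<psi> \<le> \<psi>\<^sup>*\<^sup>*\<close>, which comes from separating points below the graph from
  the closed convex epigraph of \<open>\<psi>\<close>. Now let \<open>z = (t - \<psi>(y))/2 \<cdot> w\<close> with \<open>w \<in> (S - y)\<^sup>\<circ>\<close>
  and suppose \<open>\<psi>(x) > t\<close>. The point of the segment \<open>[y, x]\<close> where \<open>\<psi>\<close> reaches \<open>t\<close> lies in
  \<open>S\<close>, so the polar condition gives \<open>(t - \<psi>(y)) \<langle>w, x - y\<rangle> \<le> \<psi>(x) - \<psi>(y)\<close>, while the
  subgradient inequality at \<open>y\<close> gives \<open>\<psi>(x) - \<psi>(y) \<le> (t - \<psi>(y))/2 \<cdot> \<langle>w, x - y\<rangle>\<close>.
  Together they force \<open>\<psi>(x) - \<psi>(y) \<le> 0\<close>, contradicting \<open>\<psi>(x) > t \<ge> \<psi>(y)\<close>.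
\<close>

lemma legendre_ge: "ereal (inner z u - f u) \<le> legendre f z"
  unfolding legendre_def by (rule SUP_upper) simp

lemma legendre_le:
  assumes "\<And>u. inner z u - f u \<le> c"
  shows "legendre f z \<le> ereal c"
  unfolding legendre_def by (rule SUP_least) (use assms in simp)

lemma convex_on_affine_minorant_above:
  fixes \<psi> :: "'a::euclidean_space \<Rightarrow> real"
  assumes cvx: "convex_on UNIV \<psi>" and below: "c < \<psi> x"
  obtains v m where "\<And>u. inner v u + m \<le> \<psi> u" and "c < inner v x + m"
proof -
  have "continuous_on UNIV \<psi>"
    using convex_on_continuous[OF open_UNIV cvx] .
  then have "closed {p. \<psi> (fst p) \<le> snd p}"
    by (intro closed_Collect_le continuous_intros continuous_on_compose2[where f = fst]) auto
  then have "closed (epigraph UNIV \<psi>)"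
    by (simp add: epigraph_def)
  moreover have "convex (epigraph UNIV \<psi>)"
    using cvx by (rule convex_epigraphI)
  moreover have "(x, c) \<notin> epigraph UNIV \<psi>"
    using below by (simp add: mem_epigraph)
  ultimately obtain ab b where sep: "inner ab (x, c) < b" "\<forall>p\<in>epigraph UNIV \<psi>. b < inner ab p"
    using separating_hyperplane_closed_point by blast
  obtain a \<beta> where ab: "ab = (a, \<beta>)" by fastforce
  have at_x: "inner a x + \<beta> * c < b"
    using sep(1) ab by (simp add: inner_Pair)
  have on_graph: "b < inner a u + \<beta> * \<psi> u" for u
    using sep(2)[rule_format, of "(u, \<psi> u)"] ab by (simp add: inner_Pair mem_epigraph)
  have "0 < \<beta> * (\<psi> x - c)"
    using at_x on_graph[of x] by (simp add: algebra_simps)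
  with below have \<beta>: "\<beta> > 0"
    by (simp add: zero_less_mult_iff)
  show thesis
  proof
    show "inner (- (1 / \<beta>) *\<^sub>R a) u + b / \<beta> \<le> \<psi> u" for u
      using on_graph[of u] \<beta> by (simp add: field_simps)
    show "c < inner (- (1 / \<beta>) *\<^sub>R a) x + b / \<beta>"
      using at_x \<beta> by (simp add: field_simps)
  qed
qed

lemma esubdiff_legendre_imp_subdiff:
  fixes \<psi> :: "'a::euclidean_space \<Rightarrow> real"
  assumes cvx: "convex_on UNIV \<psi>" and x: "x \<in> esubdiff (legendre \<psi>) z"
  shows "z \<in> subdiff \<psi> x"
proof -
  obtain L where L: "legendre \<psi> z = ereal L"
    using x unfolding esubdiff_def by (cases "legendre \<psi> z") auto
  have sub: "ereal L + ereal (inner (v - z) x) \<le> legendre \<psi> v" for v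
    using x L unfolding esubdiff_def by auto
  have young: "inner z u - \<psi> u \<le> L" for u
    using legendre_ge[of z u \<psi>] L by simp
  have biconjugate: "\<psi> x \<le> inner z x - L"
  proof (rule ccontr)
    assume "\<not> ?thesis"
    then obtain v m where minorant: "\<And>u. inner v u + m \<le> \<psi> u"
      and above: "inner z x - L < inner v x + m"
      using convex_on_affine_minorant_above[OF cvx] by (metis not_le)
    have "legendre \<psi> v \<le> ereal (- m)"
      by (rule legendre_le) (use minorant in \<open>simp add: algebra_simps\<close>)
    with sub[of v] have "L + inner (v - z) x \<le> - m"
      by (metis ereal_less_eq(3) order_trans plus_ereal.simps(1))
    with above show False
      by (simp add: inner_diff_right inner_commute)
  qed
  show ?thesis
    unfolding subdiff_def
  proof (intro CollectI allI)
    show "\<psi> x + inner z (u - x) \<le> \<psi> u" for u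
      using biconjugate young[of u] by (simp add: inner_diff_right)
  qed
qed

lemma subgradient_in_scaled_polar_imp_sublevel:
  fixes \<psi> :: "'a::real_inner \<Rightarrow> real"
  assumes cvx: "convex_on UNIV \<psi>"
    and y: "\<psi> y \<le> t"
    and w: "w \<in> polar ((\<lambda>x. x - y) ` {x. \<psi> x \<le> t})"
    and z: "((t - \<psi> y) / 2) *\<^sub>R w \<in> subdiff \<psi> x"
  shows "\<psi> x \<le> t"
proof (rule ccontr)
  assume "\<not> \<psi> x \<le> t"
  define d where "d = t - \<psi> y"
  define D where "D = \<psi> x - \<psi> y"
  define q where "q = inner w (x - y)"
  define s where "s = d / D"
  have d: "d \<ge> 0" and Dd: "D > d"
    using y \<open>\<not> \<psi> x \<le> t\<close> by (auto simp: d_def D_def)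
  have s: "0 \<le> s" "s \<le> 1"
    using d Dd by (auto simp: s_def)
  have "\<psi> ((1 - s) *\<^sub>R y + s *\<^sub>R x) \<le> (1 - s) * \<psi> y + s * \<psi> x"
    using convex_onD[OF cvx] s by simp
  also have "\<dots> = \<psi> y + s * D"
    by (simp add: D_def algebra_simps)
  also have "\<dots> = t"
    using Dd d by (simp add: s_def d_def)
  finally have "inner w (((1 - s) *\<^sub>R y + s *\<^sub>R x) - y) \<le> 1"
    using w unfolding polar_def by auto
  then have "s * q \<le> 1"
    by (simp add: q_def algebra_simps inner_diff_right)
  then have polar_bound: "d * q \<le> D"
    using Dd d by (simp add: s_def field_simps)
  have "\<psi> y \<ge> \<psi> x + inner (((t - \<psi> y) / 2) *\<^sub>R w) (y - x)"
    using z unfolding subdiff_def by blast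
  then have subgradient_bound: "D \<le> d * q / 2"
    by (simp add: D_def d_def q_def inner_diff_right algebra_simps) (simp add: field_simps)
  from polar_bound subgradient_bound Dd d show False
    by simp
qed

theorem mainTheorem13:
  fixes \<psi> :: "'a::euclidean_space \<Rightarrow> real" and t :: real and y :: 'a
  assumes "convex_on UNIV \<psi>"
    and "\<psi> 0 = 0"
    and "0 \<in> subdiff \<psi> 0"
    and "t > 0"
    and "y \<in> {x. \<psi> x \<le> t}"
  shows "(\<Union>z \<in> (\<lambda>w. ((t - \<psi> y) / 2) *\<^sub>R w) ` polar ((\<lambda>x. x - y) ` {x. \<psi> x \<le> t}).
            esubdiff (legendre \<psi>) z) \<subseteq> {x. \<psi> x \<le> t}"
proof clarify
  fix x w
  assume "w \<in> polar ((\<lambda>x. x - y) ` {x. \<psi> x \<le> t})"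
    and "x \<in> esubdiff (legendre \<psi>) (((t - \<psi> y) / 2) *\<^sub>R w)"
  with assms(1,5) show "\<psi> x \<le> t"
    by (auto intro: subgradient_in_scaled_polar_imp_sublevel esubdiff_legendre_imp_subdiff)
qed

end
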